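(* Let $t,\ell,s\geq 1$ be integers and $\varepsilon,\delta\in(0,1)$. Let $\mathcal{H}$ be a $t$-uniform $(\varepsilon,\delta)$-superspread hypergraph and let $\mathfrak{B}$ be a collection of ordered $\ell$-tuples of distinct vertices of $\mathcal{H}$ such that for any $v_1,\dots,v_{\ell-1}\in V(\mathcal{H})$ there are at most $s$ vertices $v_\ell$ with $(v_1,\dots,v_\ell)\in\mathfrak{B}$. Then at most $(\varepsilon+t!\,s\,\delta)\,e(\mathcal{H})$ edges of $\mathcal{H}$ contain (all the vertices of) some tuple of $\mathfrak{B}$.
   Context: For $S\subseteq V(\mathcal{H})$, $\deg_{\mathcal{H}}(S)=|\{e\in E(\mathcal{H}): S\subseteq e\}|$. An edge $e$ is $\delta$-heavy if there exist $S\subseteq e$ and $v\in e\setminus S$ with $\deg_{\mathcal{H}}(S\cup\{v\})\geq\delta\deg_{\mathcal{H}}(S)$; otherwise it is $\delta$-light. $\mathcal{H}$ is $(\varepsilon,\delta)$-superspread if at most $\varepsilon\,e(\mathcal{H})$ of its edges are $\delta$-heavy. *)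

theory Defs
  imports Complex_Main
begin

definition deg :: "'a set set \<Rightarrow> 'a set \<Rightarrow> nat" where
  "deg E S = card {e \<in> E. S \<subseteq> e}"

definition heavy_edge :: "'a set set \<Rightarrow> real \<Rightarrow> 'a set \<Rightarrow> bool" where
  "heavy_edge E \<delta> e \<longleftrightarrow>
     (\<exists>S v. S \<subseteq> e \<and> v \<in> e - S \<and> real (deg E (S \<union> {v})) \<ge> \<delta> * real (deg E S))"

definition superspread :: "'a set set \<Rightarrow> real \<Rightarrow> real \<Rightarrow> bool" where
  "superspread E \<epsilon> \<delta> \<longleftrightarrow>
     real (card {e \<in> E. heavy_edge E \<delta> e}) \<le> \<epsilon> * real (card E)"

definition uniform_hypergraph :: "'a set \<Rightarrow> 'a set set \<Rightarrow> nat \<Rightarrow> bool" where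
  "uniform_hypergraph V E t \<longleftrightarrow> finite V \<and> (\<forall>e\<in>E. e \<subseteq> V \<and> card e = t)"

end

theory Submission
  imports Defs
begin

text \<open>Every edge containing a tuple of \<open>B\<close> is either heavy, and there are at most \<open>\<epsilon> e(H)\<close> of those,
  or light. Write a tuple as \<open>xs @ [v]\<close>. If some light edge contains it, then lightness of that
  edge for \<open>S = set xs\<close> gives \<open>deg (set xs \<union> {v}) < \<delta> deg (set xs)\<close>, so at most \<open>\<delta> deg (set xs)\<close>
  light edges contain the tuple. Each prefix \<open>xs\<close> has at most \<open>s\<close> extensions in \<open>B\<close>, and summing
  \<open>deg (set xs)\<close> over all ordered \<open>(l-1)\<close>-tuples \<open>xs\<close> counts every edge once per ordered tuple
  inside it, i.e. at most \<open>t!\<close> times.\<close>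

definition ordered_tuples :: "'a set \<Rightarrow> nat \<Rightarrow> 'a list set" where
  "ordered_tuples A k = {xs. length xs = k \<and> distinct xs \<and> set xs \<subseteq> A}"

lemma finite_ordered_tuples:
  assumes "finite A"
  shows "finite (ordered_tuples A k)"
  unfolding ordered_tuples_def
  by (rule finite_subset[OF _ finite_lists_length_eq[OF assms, of k]]) auto

lemma card_ordered_tuples_le_fact:
  assumes "finite A"
  shows "card (ordered_tuples A k) \<le> fact (card A)"
proof (cases "k \<le> card A")
  case True
  have "card (ordered_tuples A k) = \<Prod>{card A - k + 1 .. card A}"
    unfolding ordered_tuples_def by (rule card_lists_distinct_length_eq[OF assms True])
  also have "\<dots> \<le> \<Prod>{1 .. card A}"
    by (intro dvd_imp_le prod_dvd_prod_subset) auto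
  finally show ?thesis by (simp add: fact_prod)
next
  case False
  have "k \<le> card A" if "xs \<in> ordered_tuples A k" for xs
  proof -
    have "k = card (set xs)"
      using that by (simp add: ordered_tuples_def distinct_card)
    also have "\<dots> \<le> card A"
      using that card_mono[OF assms] by (simp add: ordered_tuples_def)
    finally show ?thesis .
  qed
  then have "ordered_tuples A k = {}"
    using False by blast
  then show ?thesis by simp
qed

lemma uniform_hypergraph_finite_edges: "uniform_hypergraph V E t \<Longrightarrow> finite E"
  unfolding uniform_hypergraph_def by (metis Pow_iff finite_Pow_iff rev_finite_subset subsetI)

lemma sum_deg_ordered_tuples_le:
  assumes "uniform_hypergraph V E t"
  shows "(\<Sum>xs\<in>ordered_tuples V k. deg E (set xs)) \<le> fact t * card E"
proof -
  have fin: "finite V" "finite E" and edge: "\<And>e. e \<in> E \<Longrightarrow> e \<subseteq> V \<and> card e = t"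
    using assms uniform_hypergraph_finite_edges unfolding uniform_hypergraph_def by auto
  have "(\<Sum>xs\<in>ordered_tuples V k. deg E (set xs))
      = (\<Sum>xs\<in>ordered_tuples V k. \<Sum>e\<in>{e. e \<in> E \<and> set xs \<subseteq> e}. 1)"
    by (simp add: deg_def)
  also have "\<dots> = (\<Sum>e\<in>E. \<Sum>xs\<in>{xs. xs \<in> ordered_tuples V k \<and> set xs \<subseteq> e}. 1)"
    by (rule sum.swap_restrict[OF finite_ordered_tuples[OF fin(1)] fin(2)])
  also have "\<dots> = (\<Sum>e\<in>E. card (ordered_tuples e k))"
    using edge by (intro sum.cong refl) (auto simp: ordered_tuples_def intro!: arg_cong[of _ _ card])
  also have "\<dots> \<le> (\<Sum>e\<in>E. fact t)"
  proof (rule sum_mono)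
    fix e assume "e \<in> E"
    then have "finite e" "card e = t"
      using edge fin(1) by (auto intro: finite_subset)
    then show "card (ordered_tuples e k) \<le> fact t"
      using card_ordered_tuples_le_fact by metis
  qed
  finally show ?thesis by (simp add: mult.commute)
qed

lemma card_light_edges_containing_insert_le:
  assumes "finite E" "0 \<le> \<delta>" "v \<notin> S"
  shows "real (card {e \<in> E. \<not> heavy_edge E \<delta> e \<and> insert v S \<subseteq> e}) \<le> \<delta> * real (deg E S)"
proof (cases "\<exists>e \<in> E. \<not> heavy_edge E \<delta> e \<and> insert v S \<subseteq> e")
  case True
  then obtain e where "\<not> heavy_edge E \<delta> e" "insert v S \<subseteq> e"
    by blast
  then have "\<not> \<delta> * real (deg E S) \<le> real (deg E (S \<union> {v}))"
    using assms(3) unfolding heavy_edge_def by (metis DiffI insert_subset)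
  moreover have "card {e \<in> E. \<not> heavy_edge E \<delta> e \<and> insert v S \<subseteq> e} \<le> deg E (S \<union> {v})"
    unfolding deg_def using assms(1) by (intro card_mono) auto
  ultimately show ?thesis by linarith
next
  case False
  then have "{e \<in> E. \<not> heavy_edge E \<delta> e \<and> insert v S \<subseteq> e} = {}"
    by blast
  then show ?thesis
    using assms(2) by (simp only: card.empty of_nat_0) simp
qed

lemma card_light_edges_containing_tuple_le:
  assumes "finite E" "0 \<le> \<delta>" "distinct b" "b \<noteq> []"
  shows "real (card {e \<in> E. \<not> heavy_edge E \<delta> e \<and> set b \<subseteq> e}) \<le> \<delta> * real (deg E (set (butlast b)))"
proof -
  obtain xs v where b: "b = xs @ [v]"
    using assms(4) by (cases b rule: rev_cases) simp_all
  then have "v \<notin> set xs"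
    using assms(3) by simp
  then show ?thesis
    using card_light_edges_containing_insert_le[OF assms(1,2)] by (simp add: b)
qed

lemma sum_butlast_le:
  fixes g :: "'a list \<Rightarrow> real"
  assumes "finite B" "finite P" "butlast ` B \<subseteq> P"
    and "\<And>xs. xs \<in> P \<Longrightarrow> card {b \<in> B. butlast b = xs} \<le> s"
    and "\<And>xs. xs \<in> P \<Longrightarrow> 0 \<le> g xs"
  shows "(\<Sum>b\<in>B. g (butlast b)) \<le> real s * (\<Sum>xs\<in>P. g xs)"
proof -
  have "(\<Sum>b\<in>B. g (butlast b)) = (\<Sum>xs\<in>P. \<Sum>b\<in>{b. b \<in> B \<and> butlast b = xs}. g (butlast b))"
    by (rule sum.group[OF assms(1-3), symmetric])
  also have "\<dots> = (\<Sum>xs\<in>P. \<Sum>b\<in>{b. b \<in> B \<and> butlast b = xs}. g xs)"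
    by (intro sum.cong refl) simp
  also have "\<dots> = (\<Sum>xs\<in>P. real (card {b \<in> B. butlast b = xs}) * g xs)"
    by simp
  also have "\<dots> \<le> (\<Sum>xs\<in>P. real s * g xs)"
    using assms(4,5) by (intro sum_mono mult_right_mono) auto
  finally show ?thesis by (simp add: sum_distrib_left)
qed

lemma card_butlast_fibre_eq:
  assumes "[] \<notin> B" "\<forall>b\<in>B. set b \<subseteq> V"
  shows "card {b \<in> B. butlast b = xs} = card {v \<in> V. xs @ [v] \<in> B}"
proof -
  have "{b \<in> B. butlast b = xs} = (\<lambda>v. xs @ [v]) ` {v \<in> V. xs @ [v] \<in> B}"
  proof (intro equalityI subsetI)
    fix b assume b: "b \<in> {b \<in> B. butlast b = xs}"
    then have "b \<noteq> []"
      using assms(1) by blast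
    then have "b = xs @ [last b]" "last b \<in> set b"
      using b assms(2) append_butlast_last_id[of b] last_in_set[of b] by auto
    then show "b \<in> (\<lambda>v. xs @ [v]) ` {v \<in> V. xs @ [v] \<in> B}"
      using b assms(2) by (intro image_eqI[of _ _ "last b"]) auto
  qed auto
  then show ?thesis
    by (simp add: card_image inj_on_def)
qed

lemma card_light_edges_containing_some_tuple_le:
  assumes "uniform_hypergraph V E t" "0 \<le> \<delta>" "l \<ge> 1"
    and tuples: "\<forall>b\<in>B. length b = l \<and> distinct b \<and> set b \<subseteq> V"
    and extensions: "\<forall>xs. length xs = l - 1 \<and> set xs \<subseteq> V \<longrightarrow> card {v \<in> V. xs @ [v] \<in> B} \<le> s"
  shows "real (card {e \<in> E. \<not> heavy_edge E \<delta> e \<and> (\<exists>b\<in>B. set b \<subseteq> e)})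
    \<le> fact t * real s * \<delta> * real (card E)"
proof -
  let ?light = "\<lambda>S. {e \<in> E. \<not> heavy_edge E \<delta> e \<and> S \<subseteq> e}"
  have finE: "finite E" and finV: "finite V"
    using assms(1) uniform_hypergraph_finite_edges unfolding uniform_hypergraph_def by auto
  have B_sub: "B \<subseteq> ordered_tuples V l"
    using tuples unfolding ordered_tuples_def by auto
  then have finB: "finite B"
    using finite_ordered_tuples[OF finV] finite_subset by blast
  have nonempty: "[] \<notin> B"
    using tuples assms(3) by fastforce
  have fibres: "card {b \<in> B. butlast b = xs} \<le> s" if "xs \<in> ordered_tuples V (l - 1)" for xs
  proof -
    have "card {b \<in> B. butlast b = xs} = card {v \<in> V. xs @ [v] \<in> B}"
      using tuples by (intro card_butlast_fibre_eq[OF nonempty]) auto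
    also have "\<dots> \<le> s"
      using extensions that unfolding ordered_tuples_def by blast
    finally show ?thesis .
  qed
  have "card {e \<in> E. \<not> heavy_edge E \<delta> e \<and> (\<exists>b\<in>B. set b \<subseteq> e)} = card (\<Union>b\<in>B. ?light (set b))"
    by (rule arg_cong[of _ _ card]) auto
  also have "\<dots> \<le> (\<Sum>b\<in>B. card (?light (set b)))"
    by (rule card_UN_le[OF finB])
  finally have "real (card {e \<in> E. \<not> heavy_edge E \<delta> e \<and> (\<exists>b\<in>B. set b \<subseteq> e)})
      \<le> (\<Sum>b\<in>B. real (card (?light (set b))))"
    by (simp flip: of_nat_sum)
  also have "\<dots> \<le> (\<Sum>b\<in>B. \<delta> * real (deg E (set (butlast b))))"
    using tuples nonempty card_light_edges_containing_tuple_le[OF finE assms(2)]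
    by (intro sum_mono) metis
  also have "\<dots> \<le> real s * (\<Sum>xs\<in>ordered_tuples V (l - 1). \<delta> * real (deg E (set xs)))"
  proof (rule sum_butlast_le[OF finB finite_ordered_tuples[OF finV]])
    show "butlast ` B \<subseteq> ordered_tuples V (l - 1)"
      using B_sub by (auto simp: ordered_tuples_def distinct_butlast dest: in_set_butlastD)
  qed (use fibres assms(2) in auto)
  also have "\<dots> = real s * \<delta> * real (\<Sum>xs\<in>ordered_tuples V (l - 1). deg E (set xs))"
    by (simp add: sum_distrib_left mult.assoc)
  also have "\<dots> \<le> real s * \<delta> * real (fact t * card E)"
    by (intro mult_left_mono of_nat_mono sum_deg_ordered_tuples_le[OF assms(1)]) (use assms(2) in auto)
  finally show ?thesis by (simp add: algebra_simps)
qed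

theorem proposition2p7:
  fixes V :: "'a set" and E :: "'a set set" and B :: "'a list set"
    and t l s :: nat and \<epsilon> \<delta> :: real
  assumes "t \<ge> 1" "l \<ge> 1" "s \<ge> 1"
    and "0 < \<epsilon>" "\<epsilon> < 1" "0 < \<delta>" "\<delta> < 1"
    and "uniform_hypergraph V E t"
    and "superspread E \<epsilon> \<delta>"
    and "\<forall>b\<in>B. length b = l \<and> distinct b \<and> set b \<subseteq> V"
    and "\<forall>xs. length xs = l - 1 \<and> set xs \<subseteq> V \<longrightarrow> card {v \<in> V. xs @ [v] \<in> B} \<le> s"
  shows "real (card {e \<in> E. \<exists>b\<in>B. set b \<subseteq> e}) \<le> (\<epsilon> + fact t * real s * \<delta>) * real (card E)"
proof -
  let ?heavy = "{e \<in> E. heavy_edge E \<delta> e}"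
  let ?light = "{e \<in> E. \<not> heavy_edge E \<delta> e \<and> (\<exists>b\<in>B. set b \<subseteq> e)}"
  have "card {e \<in> E. \<exists>b\<in>B. set b \<subseteq> e} \<le> card (?heavy \<union> ?light)"
    using uniform_hypergraph_finite_edges[OF assms(8)] by (intro card_mono) auto
  also have "\<dots> \<le> card ?heavy + card ?light"
    by (rule card_Un_le)
  finally have "real (card {e \<in> E. \<exists>b\<in>B. set b \<subseteq> e}) \<le> real (card ?heavy) + real (card ?light)"
    by linarith
  moreover have "real (card ?heavy) \<le> \<epsilon> * real (card E)"
    using assms(9) unfolding superspread_def .
  moreover have "real (card ?light) \<le> fact t * real s * \<delta> * real (card E)"
    using assms(6) by (intro card_light_edges_containing_some_tuple_le[OF assms(8) _ assms(2,10,11)]) simp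
  ultimately show ?thesis by (simp add: algebra_simps)
qed

end
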